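(* Let $\theta$ be irrational and let $G=\mathbf R^2\times\mathbf T^2$ with multiplication $(s_1,t_1,z_1,w_1)(s_2,t_2,z_2,w_2)=(s_1+s_2,t_1+t_2,e^{is_1t_2}z_1z_2,e^{i\theta s_1t_2}w_1w_2)$, so that $G_{\mathrm{ab}}\cong\mathbf R^2$. Let $X=\{1/n:n\in\mathbf N\}\cup\{0\}\subset\mathbf R$, let $\lambda:X\to\mathbf Z+\theta\mathbf Z$ be continuous with $\lambda(0)=0$ and $\lambda(1/n)\ne0$ for all $n$, and define $v\in Z^2(\mathbf R^2,C(X,\mathbf T))$ by $v((s_1,t_1),(s_2,t_2))(x)=e^{i\lambda(x)s_1t_2}$. Then $v$ is not pointwise trivial, its inflation $u=\inf v\in Z^2(G,C(X,\mathbf T))$ is pointwise trivial, and the projection $p:\mathcal Z_u\to X$ is not open; consequently $u$ is not cohomologous to the inflation of any pointwise trivial cocycle on $G_{\mathrm{ab}}$.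
   Context: $C(X,\mathbf T)$ carries the compact-open topology, trivial module; cohomology is Moore's Borel cohomology. For $u\in Z^2(G,C(X,\mathbf T))$, $u(x)(s,t)=u(s,t)(x)$; pointwise trivial means each $u(x)$ is a coboundary. Inflation: $\inf v(s,t)=v(\dot s,\dot t)$ where $s\mapsto \dot s$ is the quotient $G\to G_{\mathrm{ab}}=G/\overline{[G,G]}$. $\mathcal Z_u=\{(f,x)\in C^1(G,\mathbf T)\times X:\partial f=u(x)\}$ where $C^1(G,\mathbf T)$ are Borel maps and $\partial f(s,t)=f(s)f(t)f(st)^{-1}$, with the topology in which $(f_n,x_n)\to(f,x)$ iff $f_n\to f$ pointwise and $x_n\to x$; $p(f,x)=x$. *)

theory Defs
  imports "HOL-Analysis.Analysis"
begin

text \<open>The circle group T is represented by the complex numbers of modulus 1.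
An element of C(X,T) is represented by a function real => complex, of which only
the restriction to X matters.\<close>

definition CXT :: "real set \<Rightarrow> (real \<Rightarrow> complex) set" where
  "CXT X = {f \<in> extensional X. continuous_on X f \<and> (\<forall>x\<in>X. cmod (f x) = 1)}"

text \<open>Open sets of the compact-open (= uniform, X compact) topology on C(X,T).\<close>
definition cxt_open :: "real set \<Rightarrow> (real \<Rightarrow> complex) set \<Rightarrow> bool" where
  "cxt_open X U \<longleftrightarrow> U \<subseteq> CXT X \<and>
     (\<forall>f\<in>U. \<exists>r>0. \<forall>g\<in>CXT X. (\<forall>x\<in>X. dist (f x) (g x) < r) \<longrightarrow> g \<in> U)"

definition CXT_M :: "real set \<Rightarrow> (real \<Rightarrow> complex) measure" where
  "CXT_M X = sigma (CXT X) (Collect (cxt_open X))"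

text \<open>A locally compact group is given by a measurable space M (its Borel structure,
space M = carrier) and a multiplication.\<close>

definition C1 :: "'g measure \<Rightarrow> ('g \<Rightarrow> complex) set" where
  "C1 M = {f. f \<in> borel_measurable M \<and> (\<forall>s\<in>space M. cmod (f s) = 1) \<and> f \<in> extensional (space M)}"

definition cobdry :: "('g \<Rightarrow> 'g \<Rightarrow> 'g) \<Rightarrow> ('g \<Rightarrow> complex) \<Rightarrow> 'g \<Rightarrow> 'g \<Rightarrow> complex" where
  "cobdry gmul f s t = f s * f t * inverse (f (gmul s t))"

definition is_cobdry :: "'g measure \<Rightarrow> ('g \<Rightarrow> 'g \<Rightarrow> 'g) \<Rightarrow> ('g \<Rightarrow> 'g \<Rightarrow> complex) \<Rightarrow> bool" where
  "is_cobdry M gmul c \<longleftrightarrow> (\<exists>f\<in>C1 M. \<forall>s\<in>space M. \<forall>t\<in>space M. c s t = cobdry gmul f s t)"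

text \<open>Borel 2-cocycles with values in C(X,T); u s t x stands for u(s,t)(x).\<close>
definition Z2 :: "'g measure \<Rightarrow> ('g \<Rightarrow> 'g \<Rightarrow> 'g) \<Rightarrow> real set \<Rightarrow> ('g \<Rightarrow> 'g \<Rightarrow> real \<Rightarrow> complex) set" where
  "Z2 M gmul X = {u. (\<lambda>(s,t). restrict (u s t) X) \<in> measurable (M \<Otimes>\<^sub>M M) (CXT_M X) \<and>
     (\<forall>r\<in>space M. \<forall>s\<in>space M. \<forall>t\<in>space M. \<forall>x\<in>X.
        u r s x * u (gmul r s) t x = u r (gmul s t) x * u s t x)}"

definition pointwise_trivial :: "'g measure \<Rightarrow> ('g \<Rightarrow> 'g \<Rightarrow> 'g) \<Rightarrow> real set \<Rightarrow> ('g \<Rightarrow> 'g \<Rightarrow> real \<Rightarrow> complex) \<Rightarrow> bool" where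
  "pointwise_trivial M gmul X u \<longleftrightarrow> (\<forall>x\<in>X. is_cobdry M gmul (\<lambda>s t. u s t x))"

definition cohomologous :: "'g measure \<Rightarrow> ('g \<Rightarrow> 'g \<Rightarrow> 'g) \<Rightarrow> real set \<Rightarrow>
    ('g \<Rightarrow> 'g \<Rightarrow> real \<Rightarrow> complex) \<Rightarrow> ('g \<Rightarrow> 'g \<Rightarrow> real \<Rightarrow> complex) \<Rightarrow> bool" where
  "cohomologous M gmul X u w \<longleftrightarrow> (\<exists>F. (\<lambda>s. restrict (F s) X) \<in> measurable M (CXT_M X) \<and>
     (\<forall>s\<in>space M. \<forall>t\<in>space M. \<forall>x\<in>X.
        u s t x = w s t x * (F s x * F t x * inverse (F (gmul s t) x))))"

text \<open>The space Z_u, carrying the product (pointwise) topology on functions times X.\<close>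
definition Zspace :: "'g measure \<Rightarrow> ('g \<Rightarrow> 'g \<Rightarrow> 'g) \<Rightarrow> real set \<Rightarrow>
    ('g \<Rightarrow> 'g \<Rightarrow> real \<Rightarrow> complex) \<Rightarrow> (('g \<Rightarrow> complex) \<times> real) set" where
  "Zspace M gmul X u = {(f,x). f \<in> C1 M \<and> x \<in> X \<and>
     (\<forall>s\<in>space M. \<forall>t\<in>space M. cobdry gmul f s t = u s t x)}"

definition Gcar :: "(real \<times> real \<times> complex \<times> complex) set" where
  "Gcar = {(s,t,z,w). cmod z = 1 \<and> cmod w = 1}"

definition GM :: "(real \<times> real \<times> complex \<times> complex) measure" where
  "GM = restrict_space borel Gcar"

definition Gmult :: "real \<Rightarrow> (real \<times> real \<times> complex \<times> complex) \<Rightarrow> (real \<times> real \<times> complex \<times> complex)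
     \<Rightarrow> (real \<times> real \<times> complex \<times> complex)" where
  "Gmult \<theta> g h = (case g of (s1,t1,z1,w1) \<Rightarrow> case h of (s2,t2,z2,w2) \<Rightarrow>
     (s1+s2, t1+t2, exp (\<i> * of_real (s1*t2)) * z1 * z2, exp (\<i> * of_real (\<theta> * s1 * t2)) * w1 * w2))"

definition Gab_quot :: "(real \<times> real \<times> complex \<times> complex) \<Rightarrow> real \<times> real" where
  "Gab_quot g = (fst g, fst (snd g))"

definition infl :: "((real \<times> real) \<Rightarrow> (real \<times> real) \<Rightarrow> real \<Rightarrow> complex) \<Rightarrow>
    (real \<times> real \<times> complex \<times> complex) \<Rightarrow> (real \<times> real \<times> complex \<times> complex) \<Rightarrow> real \<Rightarrow> complex" where
  "infl v g h = v (Gab_quot g) (Gab_quot h)"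

definition Xset :: "real set" where
  "Xset = {0} \<union> {1 / real n | n. n \<ge> 1}"

end

theory Submission
  imports Defs
begin

text \<open>
  At a point \<open>x\<close> the cocycle \<open>v(x)\<close> is the bicharacter \<open>exp (\<i> \<lambda>(x) s\<^sub>1 t\<^sub>2)\<close> of \<open>\<real>\<^sup>2\<close>,
  which is not symmetric when \<open>\<lambda>(x) \<noteq> 0\<close> and so is not a coboundary of the abelian group
  \<open>\<real>\<^sup>2\<close>. On \<open>G\<close>, writing \<open>\<lambda>(x) = a + \<theta> b\<close>, the inflation \<open>u(x)\<close> is the coboundary of
  \<open>(s, t, z, w) \<mapsto> z powi (-a) * w powi (-b)\<close>. Conversely, if \<open>F\<close> solves \<open>\<partial>F = u(x)\<close>, even only up to the
  inflation of a symmetric cocycle of \<open>\<real>\<^sup>2\<close>, then \<open>F\<close> divided by this solution is (up to a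
  constant) a Borel character of the central torus that is trivial on the winding line
  \<open>{(exp (\<i> r), exp (\<i> \<theta> r))}\<close>, which consists of commutators. Borel characters of \<open>\<real>\<close>
  are continuous, and the winding line is dense because \<open>\<theta>\<close> is irrational, so the character is
  trivial: the value \<open>F (0, 0, 1, z) = z powi (-b)\<close> is forced.

  Since \<open>\<lambda>(1/n) \<rightarrow> 0\<close> and \<open>\<lambda>(1/n) \<noteq> 0\<close>, the coefficients \<open>b\<^sub>n\<close> of \<open>\<lambda>(1/n)\<close> are eventually
  nonzero while \<open>b = 0\<close> at \<open>x = 0\<close>, so for a suitable \<open>z\<close> the forced values \<open>z powi (-b\<^sub>n)\<close> do not
  tend to \<open>1\<close>. This contradicts both the openness of \<open>p\<close> at the trivial solution over \<open>0\<close> and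
  the continuity in \<open>x\<close> of a cohomology with the inflation of a pointwise trivial cocycle.
\<close>

section \<open>Borel characters of the real line\<close>

lemma set_integral_Int_Icc_eq_0:
  fixes f :: "real \<Rightarrow> 'a::{banach, second_countable_topology}"
  assumes int: "set_integrable lborel {c..d} f"
    and zero: "\<And>a b. c \<le> a \<Longrightarrow> a \<le> b \<Longrightarrow> b \<le> d \<Longrightarrow> (LINT x:{a..b}|lborel. f x) = 0"
    and A: "A \<in> sets borel"
  shows "(LINT x:(A \<inter> {c..d})|lborel. f x) = 0"
  using A
proof (induction rule: borel_set_induct)
  case empty
  then show ?case by (simp add: set_lebesgue_integral_def)
next
  case (interval a b)
  show ?case
  proof (cases "max a c \<le> min b d")
    case True
    then have "{a..b} \<inter> {c..d} = {max a c..min b d}" by auto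
    then show ?thesis using zero[of "max a c" "min b d"] True by simp
  next
    case False
    then have "{a..b} \<inter> {c..d} = {}" by auto
    then show ?thesis by (simp add: set_lebesgue_integral_def)
  qed
next
  case (compl A)
  have "(LINT x:{c..d}|lborel. f x) = 0"
    using zero[of c d] by (cases "c \<le> d") (auto simp: set_lebesgue_integral_def)
  moreover have "{c..d} = (A \<inter> {c..d}) \<union> (- A \<inter> {c..d})" by auto
  moreover have "set_integrable lborel (A \<inter> {c..d}) f" "set_integrable lborel (- A \<inter> {c..d}) f"
    using compl.hyps by (auto intro: set_integrable_subset[OF int])
  ultimately have "0 = (LINT x:(A \<inter> {c..d})|lborel. f x) + (LINT x:(- A \<inter> {c..d})|lborel. f x)"
    by (metis set_integral_Un Int_assoc Compl_disjoint2 inf_bot_left inf_commute)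
  then show ?case using compl.IH by simp
next
  case (union F)
  have "(LINT x:(\<Union>i. F i \<inter> {c..d})|lborel. f x) = (\<Sum>i. LINT x:(F i \<inter> {c..d})|lborel. f x)"
    using union.hyps by (intro lebesgue_integral_countable_add set_integrable_subset[OF int])
      (auto simp: disjoint_family_on_def)
  then show ?case using union.IH by simp
qed

lemma AE_eq_0_if_interval_integrals_eq_0:
  fixes f :: "real \<Rightarrow> 'a::{banach, second_countable_topology}"
  assumes int: "set_integrable lborel {c..d} f"
    and zero: "\<And>a b. c \<le> a \<Longrightarrow> a \<le> b \<Longrightarrow> b \<le> d \<Longrightarrow> (LINT x:{a..b}|lborel. f x) = 0"
  shows "AE x in lborel. x \<in> {c..d} \<longrightarrow> f x = 0"
proof -
  have "AE x in lborel. indicator {c..d} x *\<^sub>R f x = 0"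
  proof (rule sigma_finite_measure.density_zero[OF sigma_finite_lborel])
    show "integrable lborel (\<lambda>x. indicator {c..d} x *\<^sub>R f x)"
      using int unfolding set_integrable_def .
    fix A :: "real set" assume "A \<in> sets lborel"
    then have "(LINT x:(A \<inter> {c..d})|lborel. f x) = 0"
      by (intro set_integral_Int_Icc_eq_0[OF int zero]) auto
    then show "(LINT x:A|lborel. indicator {c..d} x *\<^sub>R f x) = 0"
      by (simp add: set_lebesgue_integral_def indicator_inter_arith mult.commute)
  qed
  then show ?thesis by (rule AE_mp) (auto simp: indicator_def)
qed

lemma unimodular_set_integrable:
  fixes \<rho> :: "real \<Rightarrow> complex"
  assumes meas: "\<rho> \<in> borel_measurable borel" and unit: "\<And>x. cmod (\<rho> x) = 1"
  shows "set_integrable lborel {a..b} \<rho>"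
  unfolding set_integrable_def
proof (rule integrableI_bounded_set[where A="{a..b}" and B=1])
  show "(\<lambda>x. indicat_real {a..b} x *\<^sub>R \<rho> x) \<in> borel_measurable lborel"
    using meas by measurable
qed (auto simp: unit indicator_def emeasure_lborel_Icc_eq)

lemma unimodular_integrable_on:
  fixes \<rho> :: "real \<Rightarrow> complex"
  assumes meas: "\<rho> \<in> borel_measurable borel" and unit: "\<And>x. cmod (\<rho> x) = 1"
  shows "\<rho> integrable_on {a..b}" and "(LINT x:{a..b}|lborel. \<rho> x) = integral {a..b} \<rho>"
  using set_borel_integral_eq_integral[OF unimodular_set_integrable[OF assms]] by auto

lemma unimodular_integral_nonzero:
  fixes \<rho> :: "real \<Rightarrow> complex"
  assumes meas: "\<rho> \<in> borel_measurable borel" and unit: "\<And>x. cmod (\<rho> x) = 1"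
  shows "\<exists>\<delta>>0. integral {0..\<delta>} \<rho> \<noteq> 0"
proof (rule ccontr)
  assume "\<not> ?thesis"
  then have zero: "integral {0..\<delta>} \<rho> = 0" if "0 \<le> \<delta>" for \<delta>
    using that by (cases "\<delta> = 0") auto
  have "(LINT x:{a..b}|lborel. \<rho> x) = 0" if "0 \<le> a" "a \<le> b" for a b
  proof -
    have "integral {0..a} \<rho> + integral {a..b} \<rho> = integral {0..b} \<rho>"
      using that unimodular_integrable_on[OF meas unit]
      by (intro Henstock_Kurzweil_Integration.integral_combine) auto
    then show ?thesis using zero that unimodular_integrable_on(2)[OF meas unit] by simp
  qed
  then have "AE x in lborel. x \<in> {0..1} \<longrightarrow> \<rho> x = 0"
    by (intro AE_eq_0_if_interval_integrals_eq_0 unimodular_set_integrable[OF meas unit])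
  moreover have "\<rho> x \<noteq> 0" for x using unit[of x] by auto
  ultimately have "AE x in lborel. x \<notin> {0..1::real}" by auto
  then have "{0..1::real} \<in> null_sets lborel" by (subst AE_iff_null_sets) auto
  then show False by (auto simp: null_sets_def)
qed

lemma borel_measurable_hom_isCont:
  fixes \<rho> :: "real \<Rightarrow> complex"
  assumes meas: "\<rho> \<in> borel_measurable borel" and unit: "\<And>x. cmod (\<rho> x) = 1"
    and hom: "\<And>x y. \<rho> (x + y) = \<rho> x * \<rho> y"
  shows "isCont \<rho> x"
proof -
  obtain \<delta> where \<delta>: "\<delta> > 0" "integral {0..\<delta>} \<rho> \<noteq> 0"
    using unimodular_integral_nonzero[OF meas unit] by blast
  define J where "J = integral {0..\<delta>} \<rho>"
  have J: "J \<noteq> 0" using \<delta>(2) by (simp add: J_def)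
  have int: "\<rho> integrable_on {a..b}" for a b
    using unimodular_integrable_on[OF meas unit] by auto
  have shift: "integral {s..s+\<delta>} \<rho> = \<rho> s * J" for s
  proof -
    have "integral {0+s..\<delta>+s} \<rho> = integral {0..\<delta>} (\<rho> \<circ> (+) s)"
      by (rule integral_shift_Icc_real[symmetric])
    also have "\<rho> \<circ> (+) s = (\<lambda>y. \<rho> s * \<rho> y)" using hom by (auto simp: o_def)
    also have "integral {0..\<delta>} (\<lambda>y. \<rho> s * \<rho> y) = \<rho> s * J"
      unfolding J_def by (rule integral_mult_right)
    finally show ?thesis by (simp add: add.commute)
  qed
  define K where "K y = integral {x-1..y} \<rho>" for y
  have K_cont: "continuous_on {x-1..x+1+\<delta>} K"
    unfolding K_def by (rule indefinite_integral_continuous_1[OF int])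
  have \<rho>_eq: "\<rho> y = (K (y+\<delta>) - K y) / J" if "y \<in> {x-1..x+1}" for y
  proof -
    have "integral {x-1..y} \<rho> + integral {y..y+\<delta>} \<rho> = integral {x-1..y+\<delta>} \<rho>"
      using that \<delta> int by (intro Henstock_Kurzweil_Integration.integral_combine) auto
    then show ?thesis using shift[of y] J unfolding K_def J_def by (auto simp: field_simps)
  qed
  have "continuous_on {x-1..x+1} (\<lambda>y. K (y + \<delta>))"
    by (rule continuous_on_compose2[OF K_cont]) (use \<delta> in \<open>auto intro!: continuous_intros\<close>)
  moreover have "continuous_on {x-1..x+1} K"
    by (rule continuous_on_subset[OF K_cont]) (use \<delta> in auto)
  ultimately have "continuous_on {x-1..x+1} (\<lambda>y. (K (y+\<delta>) - K y) / J)"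
    by (intro continuous_intros) (simp_all add: J)
  then have "continuous_on {x-1..x+1} \<rho>"
    by (rule continuous_on_eq) (use \<rho>_eq in auto)
  then show ?thesis
    by (rule continuous_on_interior) auto
qed

lemma borel_measurable_hom_eq_1_if_dense:
  fixes \<rho> :: "real \<Rightarrow> complex"
  assumes meas: "\<rho> \<in> borel_measurable borel" and unit: "\<And>x. cmod (\<rho> x) = 1"
    and hom: "\<And>x y. \<rho> (x + y) = \<rho> x * \<rho> y"
    and dense: "\<And>x e. e > 0 \<Longrightarrow> \<exists>d. \<rho> d = 1 \<and> dist d x < e"
  shows "\<rho> x = 1"
proof -
  have "continuous_on UNIV \<rho>"
    using borel_measurable_hom_isCont[OF meas unit hom] by (simp add: continuous_on_eq_continuous_at)
  then have "closed {x. \<rho> x = 1}"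
    by (intro closed_Collect_eq continuous_intros)
  then show ?thesis
    using closed_approachable[of _ x] dense by force
qed

lemma ex_cos_int_mult_not_tendsto_1:
  fixes b :: "nat \<Rightarrow> int"
  assumes ev: "eventually (\<lambda>n. b n \<noteq> 0) sequentially"
  shows "\<exists>t::real. \<not> ((\<lambda>n. cos (b n * t)) \<longlonglongrightarrow> 1)"
proof (rule ccontr)
  assume "\<not> ?thesis"
  then have conv: "\<And>t::real. (\<lambda>n. cos (b n * t)) \<longlonglongrightarrow> 1" by auto
  have integral_0: "integral {0..2*pi} (\<lambda>t. cos (c * t)) = 0" if "c \<noteq> 0" for c :: int
  proof -
    have "((\<lambda>t. cos (c * t)) has_integral (sin (c * (2*pi)) / c - sin (real_of_int c * 0) / c)) {0..2*pi}"
      using that by (intro fundamental_theorem_of_calculus)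
        (auto intro!: derivative_eq_intros simp: has_real_derivative_iff_has_vector_derivative[symmetric])
    moreover have "sin (c * (2*pi)) = 0" using sin_int_2pin[of c] by (simp add: mult.commute)
    ultimately show ?thesis by (simp add: integral_unique)
  qed
  have "(\<lambda>n. integral {0..2*pi} (\<lambda>t. cos (b n * t))) \<longlonglongrightarrow> integral {0..2*pi} (\<lambda>t. 1::real)"
    by (rule dominated_convergence(2)[where h="\<lambda>_. 1"])
       (auto intro!: integrable_continuous_real continuous_intros conv)
  moreover have "eventually (\<lambda>n. integral {0..2*pi} (\<lambda>t. cos (b n * t)) = 0) sequentially"
    using ev by (rule eventually_mono) (rule integral_0)
  ultimately have "(\<lambda>n. 0::real) \<longlonglongrightarrow> integral {0..2*pi} (\<lambda>t. 1::real)"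
    by (rule Lim_transform_eventually)
  then show False using LIMSEQ_unique[OF _ tendsto_const] by fastforce
qed

lemma ex_unimodular_powi_not_tendsto_1:
  fixes b :: "nat \<Rightarrow> int"
  assumes "eventually (\<lambda>n. b n \<noteq> 0) sequentially"
  shows "\<exists>z. cmod z = 1 \<and> \<not> ((\<lambda>n. z powi b n) \<longlonglongrightarrow> 1)"
proof -
  obtain t :: real where t: "\<not> ((\<lambda>n. cos (b n * t)) \<longlonglongrightarrow> 1)"
    using ex_cos_int_mult_not_tendsto_1[OF assms] by blast
  have "Re (exp (\<i> * of_real t) powi k) = cos (k * t)" for k :: int
  proof -
    have "exp (\<i> * of_real t) powi k = exp (\<i> * of_real (k * t))"
      by (simp add: exp_power_int algebra_simps)
    then show ?thesis by (simp add: Re_exp)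
  qed
  then have "\<not> ((\<lambda>n. exp (\<i> * of_real t) powi b n) \<longlonglongrightarrow> 1)"
    using t tendsto_Re[of "\<lambda>n. exp (\<i> * of_real t) powi b n" 1] by auto
  then show ?thesis by (intro exI[of _ "exp (\<i> * of_real t)"]) simp
qed

section \<open>The group \<open>G\<close> and its central torus\<close>

lemma irrational_winding_dense:
  fixes \<theta> :: real
  assumes irr: "\<theta> \<notin> \<rat>" and e: "e > 0"
  shows "\<exists>k::int. \<exists>d. exp (\<i> * of_real d) = exp (\<i> * of_real (\<theta> * (2 * pi * k))) \<and> dist d x < e"
proof -
  have "e / (2*pi) > 0" using e by simp
  then obtain h k :: int where hk: "\<bar>k * \<theta> - h - x / (2*pi)\<bar> < e / (2*pi)"
    using sequence_of_fractional_parts_is_dense[OF irr, where \<alpha>="x / (2*pi)"] by blast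
  define d where "d = 2 * pi * (k * \<theta> - h)"
  have "dist d x = 2 * pi * \<bar>k * \<theta> - h - x / (2*pi)\<bar>"
    unfolding d_def dist_real_def by (simp add: abs_mult[symmetric] field_simps)
  also have "\<dots> < e" using hk by (simp add: field_simps)
  finally have "dist d x < e" .
  moreover have "\<i> * of_real d = \<i> * of_real (\<theta> * (2 * pi * k)) - (2 * of_int h * pi) * \<i>"
    unfolding d_def by (simp add: algebra_simps)
  then have "exp (\<i> * of_real d) = exp (\<i> * of_real (\<theta> * (2 * pi * k))) / exp ((2 * of_int h * pi) * \<i>)"
    by (simp add: exp_diff)
  moreover have "exp ((2 * of_int h * pi) * \<i>) = 1" by (rule exp_integer_2pi) simp
  ultimately show ?thesis by auto
qed

lemma space_GM [simp]: "space GM = Gcar"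
  by (simp add: GM_def space_restrict_space)

lemma Gmult_in_Gcar: "g \<in> Gcar \<Longrightarrow> h \<in> Gcar \<Longrightarrow> Gmult \<theta> g h \<in> Gcar"
  by (auto simp: Gmult_def Gcar_def norm_mult split: prod.splits)

lemma Gmult_central: "Gmult \<theta> g (0, 0, z, w) = (fst g, fst (snd g), fst (snd (snd g)) * z, snd (snd (snd g)) * w)"
  by (simp add: Gmult_def split: prod.splits)

lemma Gab_quot_Gmult: "Gab_quot (Gmult \<theta> g h) = Gab_quot g + Gab_quot h"
  by (simp add: Gab_quot_def Gmult_def split: prod.splits)

definition torus_char :: "int \<Rightarrow> int \<Rightarrow> real \<times> real \<times> complex \<times> complex \<Rightarrow> complex" where
  "torus_char a b = restrict (\<lambda>(s, t, z, w). z powi (-a) * w powi (-b)) Gcar"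

lemma torus_char_C1: "torus_char a b \<in> C1 GM"
proof -
  have "continuous_on Gcar (\<lambda>(s, t, z, w). z powi (-a) * w powi (-b))"
    unfolding Gcar_def case_prod_unfold by (intro continuous_intros) auto
  then have "(\<lambda>(s, t, z, w). z powi (-a) * w powi (-b)) \<in> borel_measurable GM"
    unfolding GM_def by (rule borel_measurable_continuous_on_restrict)
  then have "torus_char a b \<in> borel_measurable GM"
    by (rule measurable_cong[THEN iffD1, rotated]) (simp add: torus_char_def)
  then show ?thesis
    by (auto simp: C1_def torus_char_def Gcar_def norm_mult norm_power_int)
qed

lemma cobdry_torus_char:
  assumes "g \<in> Gcar" "h \<in> Gcar"
  shows "cobdry (Gmult \<theta>) (torus_char a b) g h = exp (\<i> * of_real ((a + \<theta> * b) * fst g * fst (snd h)))"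
proof -
  obtain s1 t1 z1 w1 s2 t2 z2 w2 where g: "g = (s1, t1, z1, w1)" and h: "h = (s2, t2, z2, w2)"
    by (cases g, cases h) auto
  define E where "E = exp (\<i> * of_real ((a + \<theta> * b) * s1 * t2))"
  have nz: "torus_char a b k \<noteq> 0" if "k \<in> Gcar" for k
    using that by (cases k) (auto simp: Gcar_def torus_char_def)
  have "torus_char a b (Gmult \<theta> g h) = inverse E * (torus_char a b g * torus_char a b h)"
    using Gmult_in_Gcar[OF assms] assms unfolding E_def exp_minus[symmetric]
    by (simp add: torus_char_def g h Gmult_def power_int_mult_distrib exp_power_int
        exp_add[symmetric] algebra_simps)
  then show ?thesis
    using nz assms Gmult_in_Gcar[OF assms] by (simp add: cobdry_def g h E_def field_simps)
qed

lemma torus_char_central: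
  "cmod z = 1 \<Longrightarrow> cmod w = 1 \<Longrightarrow> torus_char a b (0, 0, z, w) = z powi (-a) * w powi (-b)"
  by (simp add: torus_char_def Gcar_def)

lemma torus_char_central_mult:
  assumes "cmod z1 = 1" "cmod w1 = 1" "cmod z2 = 1" "cmod w2 = 1"
  shows "torus_char a b (0, 0, z1 * z2, w1 * w2) = torus_char a b (0, 0, z1, w1) * torus_char a b (0, 0, z2, w2)"
  using assms by (simp add: torus_char_central norm_mult power_int_mult_distrib)

lemma torus_char_winding:
  "torus_char a b (0, 0, exp (\<i> * of_real r), exp (\<i> * of_real (\<theta> * r))) =
   exp (- (\<i> * of_real ((a + \<theta> * b) * r)))"
proof -
  have "exp (\<i> * of_real r) powi (-a) * exp (\<i> * of_real (\<theta> * r)) powi (-b) =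
      exp (of_int (-a) * (\<i> * of_real r) + of_int (-b) * (\<i> * of_real (\<theta> * r)))"
    by (simp add: exp_power_int exp_add[symmetric])
  also have "\<dots> = exp (- (\<i> * of_real ((a + \<theta> * b) * r)))"
    by (simp add: algebra_simps)
  finally show ?thesis by (simp add: torus_char_central)
qed

lemma central_char_trivial:
  fixes ch :: "real \<times> real \<times> complex \<times> complex \<Rightarrow> complex"
  assumes irr: "\<theta> \<notin> \<rat>"
    and meas: "ch \<in> borel_measurable GM"
    and unit: "\<And>g. g \<in> Gcar \<Longrightarrow> cmod (ch g) = 1"
    and hom: "\<And>z1 w1 z2 w2. cmod z1 = 1 \<Longrightarrow> cmod w1 = 1 \<Longrightarrow> cmod z2 = 1 \<Longrightarrow> cmod w2 = 1 \<Longrightarrow>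
       ch (0, 0, z1 * z2, w1 * w2) = ch (0, 0, z1, w1) * ch (0, 0, z2, w2)"
    and winding: "\<And>r. ch (0, 0, exp (\<i> * of_real r), exp (\<i> * of_real (\<theta> * r))) = 1"
    and z: "cmod z = 1"
  shows "ch (0, 0, 1, z) = 1"
proof -
  define \<rho> where "\<rho> \<beta> = ch (0, 0, 1, exp (\<i> * of_real \<beta>))" for \<beta>
  have "(\<lambda>\<beta>::real. (0::real, 0::real, 1::complex, exp (\<i> * of_real \<beta>))) \<in> borel \<rightarrow>\<^sub>M GM"
    unfolding GM_def by (rule measurable_restrict_space2) (auto simp: Gcar_def)
  from measurable_comp[OF this meas] have "\<rho> \<in> borel_measurable borel"
    unfolding \<rho>_def by (simp add: o_def)
  moreover have "cmod (\<rho> x) = 1" for x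
    unfolding \<rho>_def by (rule unit) (simp add: Gcar_def)
  moreover have "\<rho> (x + y) = \<rho> x * \<rho> y" for x y
    using hom[of 1 "exp (\<i> * of_real x)" 1 "exp (\<i> * of_real y)"]
    by (simp add: \<rho>_def distrib_left exp_add)
  moreover have "\<exists>d. \<rho> d = 1 \<and> dist d x < e" if "e > 0" for x e
  proof -
    obtain k :: int and d where "exp (\<i> * of_real d) = exp (\<i> * of_real (\<theta> * (2 * pi * k)))"
      and "dist d x < e"
      using irrational_winding_dense[OF irr \<open>e > 0\<close>] by blast
    moreover have "exp (\<i> * of_real (2 * pi * k)) = 1"
      using exp_integer_2pi[of "of_int k"] by (simp add: mult_ac)
    ultimately show ?thesis
      using winding[of "2 * pi * k"] by (auto simp: \<rho>_def intro!: exI[of _ d])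
  qed
  ultimately have "\<rho> (Arg z) = 1"
    by (rule borel_measurable_hom_eq_1_if_dense)
  moreover have "exp (\<i> * of_real (Arg z)) = z"
  proof -
    have "z \<noteq> 0" using z by auto
    then show ?thesis using z cis_Arg[of z] by (simp add: cis_conv_exp sgn_eq)
  qed
  ultimately show ?thesis by (simp add: \<rho>_def)
qed

text \<open>The case \<open>c = 1\<close> is a point of \<open>\<Z>\<^sub>u\<close>
  over \<open>x\<close>; general \<open>c\<close> arises from a cohomology between \<open>u\<close> and the inflation of a pointwise
  trivial cocycle.\<close>

locale cobdry_mod_symmetric =
  fixes \<theta> :: real and a b :: int
    and c :: "real \<times> real \<Rightarrow> real \<times> real \<Rightarrow> complex"
    and F :: "real \<times> real \<times> complex \<times> complex \<Rightarrow> complex"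
  assumes c_cocycle: "\<And>r s t. c r s * c (r + s) t = c r (s + t) * c s t"
    and c_unit: "\<And>s t. cmod (c s t) = 1"
    and c_sym: "\<And>s t. c s t = c t s"
    and F_meas: "F \<in> borel_measurable GM"
    and F_unit: "\<And>g. g \<in> Gcar \<Longrightarrow> cmod (F g) = 1"
    and F_solves: "\<And>g h. g \<in> Gcar \<Longrightarrow> h \<in> Gcar \<Longrightarrow>
      c (Gab_quot g) (Gab_quot h) * cobdry (Gmult \<theta>) F g h =
      exp (\<i> * of_real ((a + \<theta> * b) * fst g * fst (snd h)))"
begin

lemma c_right_0: "c s 0 = c 0 0"
proof -
  have "c s 0 * c s 0 = c s 0 * c 0 0" using c_cocycle[of s 0 0] by simp
  moreover have "c s 0 \<noteq> 0" using c_unit[of s 0] by auto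
  ultimately show ?thesis by simp
qed

lemma F_nonzero: "g \<in> Gcar \<Longrightarrow> F g \<noteq> 0"
  using F_unit by fastforce

lemma F_Gmult_central:
  assumes g: "g \<in> Gcar" and "cmod z = 1" "cmod w = 1"
  shows "F (Gmult \<theta> g (0, 0, z, w)) = c 0 0 * F g * F (0, 0, z, w)"
proof -
  have zw: "(0, 0, z, w) \<in> Gcar" using assms by (simp add: Gcar_def)
  have "Gab_quot (0::real, 0::real, z, w) = 0" by (simp add: Gab_quot_def zero_prod_def)
  then have "c (Gab_quot g) (Gab_quot (0, 0, z, w)) = c 0 0"
    using c_right_0[of "Gab_quot g"] by simp
  then have "c 0 0 * (F g * F (0, 0, z, w) * inverse (F (Gmult \<theta> g (0, 0, z, w)))) = 1"
    using F_solves[OF g zw] by (simp add: cobdry_def)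
  then show ?thesis
    using F_nonzero[OF Gmult_in_Gcar[OF g zw]] by (simp add: field_simps)
qed

lemma F_central_mult:
  assumes "cmod z1 = 1" "cmod w1 = 1" "cmod z2 = 1" "cmod w2 = 1"
  shows "c 0 0 * F (0, 0, z1 * z2, w1 * w2) = c 0 0 * F (0, 0, z1, w1) * (c 0 0 * F (0, 0, z2, w2))"
  using F_Gmult_central[of "(0, 0, z1, w1)" z2 w2] assms by (simp add: Gcar_def Gmult_central)

text \<open>The commutator of \<open>(r, 0, 1, 1)\<close> and \<open>(0, 1, 1, 1)\<close> is the central element
  \<open>(0, 0, exp (\<i> r), exp (\<i> \<theta> r))\<close>, and the symmetric part \<open>c\<close> cancels from it.\<close>
lemma F_winding:
  "c 0 0 * F (0, 0, exp (\<i> * of_real r), exp (\<i> * of_real (\<theta> * r))) =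
   exp (- (\<i> * of_real ((a + \<theta> * b) * r)))"
proof -
  define g where "g = (r, 0::real, 1::complex, 1::complex)"
  define h where "h = (0::real, 1::real, 1::complex, 1::complex)"
  define z where "z = (0::real, 0::real, exp (\<i> * of_real r), exp (\<i> * of_real (\<theta> * r)))"
  define E where "E = exp (\<i> * of_real ((a + \<theta> * b) * r))"
  have G: "g \<in> Gcar" "h \<in> Gcar" "Gmult \<theta> h g \<in> Gcar" "Gmult \<theta> g h \<in> Gcar"
    by (simp_all add: g_def h_def Gcar_def Gmult_def)
  have "Gmult \<theta> g h = Gmult \<theta> (Gmult \<theta> h g) z"
    by (simp add: g_def h_def z_def Gmult_def)
  then have F_gh: "F (Gmult \<theta> g h) = c 0 0 * F (Gmult \<theta> h g) * F z"
    using F_Gmult_central[OF G(3)] by (simp add: z_def)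
  define P where "P = c (Gab_quot g) (Gab_quot h) * F g * F h"
  have "E = P / F (Gmult \<theta> g h)"
    using F_solves[OF G(1,2)] by (simp add: g_def h_def E_def P_def cobdry_def divide_inverse mult_ac)
  moreover have "1 = P / F (Gmult \<theta> h g)"
    using F_solves[OF G(2,1)] c_sym by (simp add: g_def h_def P_def cobdry_def divide_inverse mult_ac)
  ultimately have "E * F (Gmult \<theta> g h) = F (Gmult \<theta> h g)"
    using F_nonzero[OF G(3)] F_nonzero[OF G(4)] by simp
  then have "F (Gmult \<theta> h g) * (E * (c 0 0 * F z)) = F (Gmult \<theta> h g)"
    unfolding F_gh by (simp add: ac_simps)
  then have "E * (c 0 0 * F z) = 1"
    using F_nonzero[OF G(3)] by simp
  then have "inverse E = c 0 0 * F z"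
    by (rule inverse_unique)
  then show ?thesis
    unfolding z_def E_def exp_minus by simp
qed

lemma F_center_value:
  assumes irr: "\<theta> \<notin> \<rat>" and z: "cmod z = 1"
  shows "c 0 0 * F (0, 0, 1, z) = z powi (-b)"
proof -
  define ch where "ch g = c 0 0 * F g / torus_char a b g" for g
  have tc: "torus_char a b \<in> borel_measurable GM" "\<And>g. g \<in> Gcar \<Longrightarrow> cmod (torus_char a b g) = 1"
    using torus_char_C1[of a b] by (auto simp: C1_def)
  have "ch (0, 0, 1, z) = 1"
  proof (rule central_char_trivial[OF irr _ _ _ _ z])
    show "ch \<in> borel_measurable GM"
      unfolding ch_def by (intro borel_measurable_divide borel_measurable_times borel_measurable_const F_meas tc(1))
    show "cmod (ch g) = 1" if "g \<in> Gcar" for g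
      using F_unit[OF that] tc(2)[OF that] c_unit[of 0 0] by (simp add: ch_def norm_mult norm_divide)
    show "ch (0, 0, z1 * z2, w1 * w2) = ch (0, 0, z1, w1) * ch (0, 0, z2, w2)"
      if "cmod z1 = 1" "cmod w1 = 1" "cmod z2 = 1" "cmod w2 = 1" for z1 w1 z2 w2
      unfolding ch_def F_central_mult[OF that] torus_char_central_mult[OF that]
      by (rule times_divide_times_eq[symmetric])
    show "ch (0, 0, exp (\<i> * of_real r), exp (\<i> * of_real (\<theta> * r))) = 1" for r
      unfolding ch_def F_winding torus_char_winding by simp
  qed
  then show ?thesis
    using z by (simp add: ch_def torus_char_central)
qed

end

section \<open>The space \<open>X\<close> and \<open>C(X, \<T>)\<close>\<close>

lemma inverse_Suc_in_Xset: "1 / real (Suc n) \<in> Xset"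
  unfolding Xset_def by (auto intro!: exI[of _ "Suc n"])

lemma zero_in_Xset: "0 \<in> Xset"
  by (simp add: Xset_def)

lemma continuous_on_Xset_tendsto:
  fixes f :: "real \<Rightarrow> 'a::topological_space"
  assumes "continuous_on Xset f"
  shows "(\<lambda>n. f (1 / real (Suc n))) \<longlonglongrightarrow> f 0"
  by (rule continuous_on_tendsto_compose[OF assms LIMSEQ_inverse_real_of_nat[unfolded inverse_eq_divide] zero_in_Xset])
    (intro always_eventually allI inverse_Suc_in_Xset)

lemma Xset_eq: "Xset = insert 0 (range (\<lambda>n. 1 / real (Suc n)))"
proof -
  have "{1 / real n | n. n \<ge> 1} = range (\<lambda>n. 1 / real (Suc n))"
  proof safe
    fix n :: nat assume "n \<ge> 1"
    then show "1 / real n \<in> range (\<lambda>n. 1 / real (Suc n))"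
      by (intro image_eqI[of _ _ "n - 1"]) auto
  qed (auto intro!: exI[of _ "Suc n" for n])
  then show ?thesis unfolding Xset_def by auto
qed

lemma compact_Xset: "compact Xset"
  unfolding Xset_eq
  by (rule compact_sequence_with_limit[OF LIMSEQ_inverse_real_of_nat[unfolded inverse_eq_divide]])

lemma space_CXT_M [simp]: "space (CXT_M X) = CXT X"
  unfolding CXT_M_def by (rule space_measure_of) (auto simp: cxt_open_def)

lemma sets_CXT_M: "sets (CXT_M X) = sigma_sets (CXT X) (Collect (cxt_open X))"
  unfolding CXT_M_def by (rule sets_measure_of) (auto simp: cxt_open_def)

lemma measurable_CXT_M_borelI:
  assumes "\<And>p. \<Phi> p \<in> CXT X" and "\<And>U. cxt_open X U \<Longrightarrow> open (\<Phi> -` U)"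
  shows "\<Phi> \<in> borel \<rightarrow>\<^sub>M CXT_M X"
  unfolding CXT_M_def
  by (rule measurable_measure_of) (use assms in \<open>auto simp: cxt_open_def\<close>)

lemma measurable_CXT_M_eval:
  assumes "x \<in> X"
  shows "(\<lambda>f. f x) \<in> borel_measurable (CXT_M X)"
proof (rule borel_measurableI)
  fix S :: "complex set" assume "open S"
  have "cxt_open X ((\<lambda>f. f x) -` S \<inter> CXT X)"
    unfolding cxt_open_def
  proof (intro conjI ballI)
    fix f assume "f \<in> (\<lambda>f. f x) -` S \<inter> CXT X"
    then obtain r where "r > 0" "ball (f x) r \<subseteq> S"
      using \<open>open S\<close> open_contains_ball by blast
    then show "\<exists>r>0. \<forall>g\<in>CXT X. (\<forall>y\<in>X. dist (f y) (g y) < r) \<longrightarrow> g \<in> (\<lambda>f. f x) -` S \<inter> CXT X"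
      using assms by (intro exI[of _ r]) (auto simp: subset_eq)
  qed auto
  then show "(\<lambda>f. f x) -` S \<inter> space (CXT_M X) \<in> sets (CXT_M X)"
    by (simp add: sets_CXT_M sigma_sets.Basic)
qed

lemma CXT_continuous_on: "restrict f X \<in> CXT X \<Longrightarrow> continuous_on X f"
  unfolding CXT_def by (auto elim: continuous_on_eq)

lemma dist_exp_i_le: "dist (exp (\<i> * of_real \<alpha>)) (exp (\<i> * of_real \<beta>)) \<le> \<bar>\<alpha> - \<beta>\<bar>"
proof -
  have "exp (\<i> * of_real \<alpha>) - exp (\<i> * of_real \<beta>) = exp (\<i> * of_real \<beta>) * (exp (\<i> * of_real (\<alpha> - \<beta>)) - 1)"
    by (simp add: algebra_simps exp_diff[symmetric] exp_add[symmetric])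
  then have "dist (exp (\<i> * of_real \<alpha>)) (exp (\<i> * of_real \<beta>)) = cmod (exp (\<i> * of_real (\<alpha> - \<beta>)) - 1)"
    by (simp add: dist_norm norm_mult)
  also have "\<dots> = 2 * \<bar>sin ((\<alpha> - \<beta>) / 2)\<bar>" by (rule dist_exp_i_1)
  also have "\<dots> \<le> \<bar>\<alpha> - \<beta>\<bar>"
    using abs_sin_x_le_abs_x[of "(\<alpha> - \<beta>) / 2"] unfolding abs_divide by simp
  finally show ?thesis .
qed

lemma exp_mult_measurable_CXT_M:
  fixes lam :: "real \<Rightarrow> real"
  assumes X: "compact X" and lam: "continuous_on X lam"
  shows "(\<lambda>p. restrict (\<lambda>x. exp (\<i> * of_real (lam x * p))) X) \<in> borel \<rightarrow>\<^sub>M CXT_M X"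
    (is "?E \<in> _")
proof (rule measurable_CXT_M_borelI)
  have E_in: "?E p \<in> CXT X" for p
  proof -
    have "continuous_on X (\<lambda>x. exp (\<i> * of_real (lam x * p)))"
      by (intro continuous_intros lam)
    then show ?thesis unfolding CXT_def by (auto elim: continuous_on_eq)
  qed
  then show "?E p \<in> CXT X" for p .
  obtain L where L: "L > 0" "\<And>x. x \<in> X \<Longrightarrow> \<bar>lam x\<bar> \<le> L"
    using compact_imp_bounded[OF compact_continuous_image[OF lam X]] unfolding bounded_pos by auto
  fix U assume U: "cxt_open X U"
  show "open (?E -` U)"
    unfolding open_dist
  proof (intro ballI)
    fix p0 assume "p0 \<in> ?E -` U"
    then obtain r where r: "r > 0" and ball: "\<And>g. g \<in> CXT X \<Longrightarrow> (\<forall>x\<in>X. dist (?E p0 x) (g x) < r) \<Longrightarrow> g \<in> U"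
      using U unfolding cxt_open_def by blast
    have "?E p \<in> U" if "dist p p0 < r / L" for p
    proof (rule ball[OF E_in], intro ballI)
      fix x assume x: "x \<in> X"
      have "dist (?E p0 x) (?E p x) \<le> \<bar>lam x\<bar> * dist p p0"
        using x dist_exp_i_le[of "lam x * p0" "lam x * p"]
        by (simp add: dist_real_def abs_mult[symmetric] algebra_simps)
      also have "\<dots> \<le> L * dist p p0" using L(2)[OF x] by (intro mult_right_mono) auto
      also have "\<dots> < r" using that L(1) by (simp add: field_simps)
      finally show "dist (?E p0 x) (?E p x) < r" .
    qed
    then show "\<exists>e>0. \<forall>p. dist p p0 < e \<longrightarrow> p \<in> ?E -` U"
      using r L(1) by (intro exI[of _ "r / L"]) auto
  qed
qed

section \<open>The cocycle \<open>v\<close>\<close>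

lemma irrational_coeffs_unique:
  fixes \<theta> :: real and a b a' b' :: int
  assumes irr: "\<theta> \<notin> \<rat>" and eq: "a + \<theta> * b = a' + \<theta> * b'"
  shows "b = b'"
proof (rule ccontr)
  assume "b \<noteq> b'"
  then have "\<theta> = (a' - a) / (b - b')" using eq by (auto simp: field_simps)
  then show False using irr by (metis Rats_divide Rats_of_int of_int_diff)
qed

lemma eventually_irrational_coeff_nonzero:
  fixes \<theta> :: real and A B :: "nat \<Rightarrow> int"
  assumes lim: "(\<lambda>n. A n + \<theta> * B n) \<longlonglongrightarrow> 0" and nz: "\<And>n. A n + \<theta> * B n \<noteq> 0"
  shows "eventually (\<lambda>n. B n \<noteq> 0) sequentially"
proof -
  have "eventually (\<lambda>n. \<bar>A n + \<theta> * B n\<bar> < 1) sequentially"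
    using lim unfolding LIMSEQ_iff by (auto simp: eventually_sequentially)
  then show ?thesis
  proof (rule eventually_mono)
    fix n assume small: "\<bar>A n + \<theta> * B n\<bar> < 1"
    show "B n \<noteq> 0"
    proof
      assume "B n = 0"
      then have "A n = 0" using small by simp
      then show False using nz[of n] \<open>B n = 0\<close> by simp
    qed
  qed
qed

definition bichar_cocycle :: "(real \<Rightarrow> real) \<Rightarrow> real \<times> real \<Rightarrow> real \<times> real \<Rightarrow> real \<Rightarrow> complex" where
  "bichar_cocycle lam s t = (\<lambda>x. exp (\<i> * of_real (lam x * fst s * snd t)))"

lemma infl_bichar_cocycle:
  "infl (bichar_cocycle lam) g h = (\<lambda>x. exp (\<i> * of_real (lam x * fst g * fst (snd h))))"
  by (simp add: infl_def Gab_quot_def bichar_cocycle_def)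

lemma pointwise_trivial_sym:
  fixes w :: "'g::ab_semigroup_add \<Rightarrow> 'g \<Rightarrow> real \<Rightarrow> complex"
  assumes "pointwise_trivial M (+) X w" "x \<in> X" "s \<in> space M" "t \<in> space M"
  shows "w s t x = w t s x"
proof -
  obtain f where "\<forall>s\<in>space M. \<forall>t\<in>space M. w s t x = cobdry (+) f s t"
    using assms(1,2) unfolding pointwise_trivial_def is_cobdry_def by blast
  then show ?thesis
    using assms(3,4) by (simp add: cobdry_def add.commute mult.commute)
qed

lemma bichar_cocycle_Z2:
  assumes "compact X" "continuous_on X lam"
  shows "bichar_cocycle lam \<in> Z2 borel (+) X"
proof -
  have "(\<lambda>(s, t). fst s * snd t) \<in> borel_measurable (borel \<Otimes>\<^sub>M borel :: ((real \<times> real) \<times> real \<times> real) measure)"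
    unfolding borel_prod case_prod_unfold by (intro borel_measurable_continuous_onI continuous_intros)
  from measurable_comp[OF this exp_mult_measurable_CXT_M[OF assms]]
  have "(\<lambda>(s, t). restrict (bichar_cocycle lam s t) X) \<in> borel \<Otimes>\<^sub>M borel \<rightarrow>\<^sub>M CXT_M X"
    by (simp add: o_def case_prod_unfold bichar_cocycle_def mult.assoc)
  then show ?thesis
    by (simp add: Z2_def bichar_cocycle_def exp_add[symmetric] algebra_simps)
qed

lemma bichar_cocycle_not_pointwise_trivial:
  assumes "x \<in> X" "lam x \<noteq> 0"
  shows "\<not> pointwise_trivial borel (+) X (bichar_cocycle lam)"
proof
  assume "pointwise_trivial borel (+) X (bichar_cocycle lam)"
  from pointwise_trivial_sym[OF this \<open>x \<in> X\<close>, of "(1, 0)" "(0, pi / lam x)"]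
  have "exp (\<i> * of_real pi) = 1"
    using assms(2) by (simp add: bichar_cocycle_def)
  then show False by simp
qed

lemma GM_measurable_coordinates [measurable]:
  "fst \<in> borel_measurable GM" "(\<lambda>g. fst (snd g)) \<in> borel_measurable GM"
  unfolding GM_def by (intro measurable_restrict_space1 borel_measurable_continuous_onI continuous_intros)+

lemma infl_bichar_cocycle_Z2:
  assumes "compact X" "continuous_on X lam"
  shows "infl (bichar_cocycle lam) \<in> Z2 GM (Gmult \<theta>) X"
proof -
  have "(\<lambda>(g, h). fst g * fst (snd h)) \<in> borel_measurable (GM \<Otimes>\<^sub>M GM)"
    by measurable
  from measurable_comp[OF this exp_mult_measurable_CXT_M[OF assms]]
  have "(\<lambda>(g, h). restrict (infl (bichar_cocycle lam) g h) X) \<in> GM \<Otimes>\<^sub>M GM \<rightarrow>\<^sub>M CXT_M X"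
    by (simp add: o_def case_prod_unfold infl_bichar_cocycle mult.assoc)
  moreover have "infl (bichar_cocycle lam) r s x * infl (bichar_cocycle lam) (Gmult \<theta> r s) t x =
      infl (bichar_cocycle lam) r (Gmult \<theta> s t) x * infl (bichar_cocycle lam) s t x" for r s t x
    unfolding infl_def Gab_quot_Gmult by (simp add: bichar_cocycle_def exp_add[symmetric] algebra_simps)
  ultimately show ?thesis
    by (simp add: Z2_def)
qed

lemma infl_bichar_cocycle_pointwise_trivial:
  fixes \<theta> :: real and lam :: "real \<Rightarrow> real"
  assumes "\<forall>x\<in>X. \<exists>a b :: int. lam x = of_int a + \<theta> * of_int b"
  shows "pointwise_trivial GM (Gmult \<theta>) X (infl (bichar_cocycle lam))"
  unfolding pointwise_trivial_def is_cobdry_def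
proof
  fix x assume "x \<in> X"
  then obtain a b :: int where "lam x = a + \<theta> * b" using assms by blast
  then have "\<forall>g\<in>space GM. \<forall>h\<in>space GM.
      infl (bichar_cocycle lam) g h x = cobdry (Gmult \<theta>) (torus_char a b) g h"
    by (simp add: cobdry_torus_char infl_bichar_cocycle)
  then show "\<exists>f\<in>C1 GM. \<forall>g\<in>space GM. \<forall>h\<in>space GM. infl (bichar_cocycle lam) g h x = cobdry (Gmult \<theta>) f g h"
    using torus_char_C1 by blast
qed

lemma cobdry_mod_symmetric_if_Zspace:
  assumes "(f, x) \<in> Zspace GM (Gmult \<theta>) X (infl (bichar_cocycle lam))" and "lam x = a + \<theta> * b"
  shows "cobdry_mod_symmetric \<theta> a b (\<lambda>_ _. 1) f"
  using assms by unfold_locales (auto simp: Zspace_def C1_def infl_bichar_cocycle)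

lemma cobdry_mod_symmetric_if_cohomologous:
  assumes w: "w \<in> Z2 borel (+) X" "pointwise_trivial borel (+) X w"
    and F: "(\<lambda>s. restrict (F s) X) \<in> GM \<rightarrow>\<^sub>M CXT_M X"
    and coh: "\<forall>g\<in>Gcar. \<forall>h\<in>Gcar. \<forall>x\<in>X. infl (bichar_cocycle lam) g h x =
      infl w g h x * (F g x * F h x * inverse (F (Gmult \<theta> g h) x))"
    and x: "x \<in> X" and lam: "lam x = a + \<theta> * b"
  shows "cobdry_mod_symmetric \<theta> a b (\<lambda>s t. w s t x) (\<lambda>g. F g x)"
proof unfold_locales
  have w_meas: "(\<lambda>(s, t). restrict (w s t) X) \<in> borel \<Otimes>\<^sub>M borel \<rightarrow>\<^sub>M CXT_M X"
    using w(1) by (simp add: Z2_def)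
  show "w r s x * w (r + s) t x = w r (s + t) x * w s t x" for r s t
    using w(1) x unfolding Z2_def space_borel by blast
  show "cmod (w s t x) = 1" for s t
    using measurable_space[OF w_meas, of "(s, t)"] x by (simp add: space_pair_measure CXT_def)
  show "w s t x = w t s x" for s t
    using pointwise_trivial_sym[OF w(2) x] by simp
  show "(\<lambda>g. F g x) \<in> borel_measurable GM"
    using measurable_comp[OF F measurable_CXT_M_eval[OF x]] x by (simp add: o_def)
  show "cmod (F g x) = 1" if "g \<in> Gcar" for g
    using measurable_space[OF F, of g] that x by (simp add: CXT_def)
  show "w (Gab_quot g) (Gab_quot h) x * cobdry (Gmult \<theta>) (\<lambda>g. F g x) g h =
      exp (\<i> * of_real ((a + \<theta> * b) * fst g * fst (snd h)))" if "g \<in> Gcar" "h \<in> Gcar" for g h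
  proof -
    have "infl (bichar_cocycle lam) g h x = infl w g h x * cobdry (Gmult \<theta>) (\<lambda>g. F g x) g h"
      using coh that x by (simp add: cobdry_def)
    then show ?thesis by (simp add: bichar_cocycle_def Gab_quot_def infl_def lam)
  qed
qed

lemma Zspace_center_value:
  fixes \<theta> :: real and lam :: "real \<Rightarrow> real" and a b :: int
  assumes irr: "\<theta> \<notin> \<rat>" and "(f, x) \<in> Zspace GM (Gmult \<theta>) X (infl (bichar_cocycle lam))"
    and "lam x = a + \<theta> * b" and z: "cmod z = 1"
  shows "f (0, 0, 1, z) = z powi (-b)"
  using cobdry_mod_symmetric.F_center_value[OF cobdry_mod_symmetric_if_Zspace[OF assms(2,3)] irr z]
  by simp

lemma Zspace_snd_not_open_map:
  fixes \<theta> :: real and lam :: "real \<Rightarrow> real" and A B :: "real \<Rightarrow> int"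
  assumes irr: "\<theta> \<notin> \<rat>" and lam0: "lam 0 = 0"
    and AB: "\<And>x. x \<in> Xset \<Longrightarrow> lam x = A x + \<theta> * B x"
    and z: "cmod z = 1" and not_lim: "\<not> (\<lambda>n. z powi (- B (1 / real (Suc n)))) \<longlonglongrightarrow> 1"
  shows "\<not> open_map (top_of_set (Zspace GM (Gmult \<theta>) Xset (infl (bichar_cocycle lam)))) (top_of_set Xset) snd"
proof
  define Z where "Z = Zspace GM (Gmult \<theta>) Xset (infl (bichar_cocycle lam))"
  assume "open_map (top_of_set Z) (top_of_set Xset) snd"
  then have open_snd: "openin (top_of_set Xset) (snd ` U)" if "openin (top_of_set Z) U" for U
    using that unfolding open_map_def by blast
  define g0 where "g0 = (0::real, 0::real, 1::complex, z)"
  define f0 where "f0 = restrict (\<lambda>_. 1::complex) Gcar"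
  have f0_Z: "(f0, 0) \<in> Z"
  proof -
    have "(\<lambda>_. 1::complex) \<in> borel_measurable GM" by simp
    then have "f0 \<in> borel_measurable GM"
      by (rule measurable_cong[THEN iffD1, rotated]) (simp add: f0_def)
    then have "f0 \<in> C1 GM"
      by (simp add: C1_def f0_def)
    moreover have "cobdry (Gmult \<theta>) f0 g h = infl (bichar_cocycle lam) g h 0" if "g \<in> Gcar" "h \<in> Gcar" for g h
      using that Gmult_in_Gcar[OF that] by (simp add: f0_def cobdry_def infl_bichar_cocycle lam0)
    ultimately show ?thesis
      by (simp add: Z_def Zspace_def zero_in_Xset)
  qed
  \<comment> \<open>solutions close to \<open>f0\<close> exist over all points close to 0, but their value at \<open>g0\<close> is forced\<close>
  have "(\<lambda>n. z powi (- B (1 / real (Suc n)))) \<longlonglongrightarrow> 1"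
  proof (rule tendstoI)
    fix \<epsilon> :: real assume "\<epsilon> > 0"
    define U where "U = Z \<inter> {p. dist (fst p g0) 1 < \<epsilon>}"
    have "continuous_on UNIV (\<lambda>p::((real \<times> real \<times> complex \<times> complex) \<Rightarrow> complex) \<times> real. fst p g0)"
      by (rule continuous_on_compose2[OF continuous_on_product_coordinates continuous_on_fst[OF continuous_on_id]])
        auto
    then have "open {p::((real \<times> real \<times> complex \<times> complex) \<Rightarrow> complex) \<times> real. dist (fst p g0) 1 < \<epsilon>}"
      by (intro open_Collect_less continuous_intros)
    then have "openin (top_of_set Xset) (snd ` U)"
      unfolding U_def by (intro open_snd openin_open_Int)
    then obtain T where T: "open T" "snd ` U = T \<inter> Xset"
      by (auto simp: openin_open)
    have "(f0, 0) \<in> U"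
      using f0_Z \<open>\<epsilon> > 0\<close> z by (simp add: U_def f0_def g0_def Gcar_def)
    then have "0 \<in> T"
      using T(2) by (metis IntD1 image_eqI snd_conv)
    then have "eventually (\<lambda>n. 1 / real (Suc n) \<in> T) sequentially"
      by (rule topological_tendstoD[OF LIMSEQ_inverse_real_of_nat[unfolded inverse_eq_divide] T(1)])
    then show "eventually (\<lambda>n. dist (z powi (- B (1 / real (Suc n)))) 1 < \<epsilon>) sequentially"
    proof (rule eventually_mono)
      fix n
      assume "1 / real (Suc n) \<in> T"
      then have "1 / real (Suc n) \<in> snd ` U"
        using T(2) inverse_Suc_in_Xset by blast
      then obtain f where "(f, 1 / real (Suc n)) \<in> U"
        by (metis imageE prod.collapse)
      then have "(f, 1 / real (Suc n)) \<in> Z" and "dist (f g0) 1 < \<epsilon>"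
        by (simp_all add: U_def)
      moreover from this(1) have "f g0 = z powi (- B (1 / real (Suc n)))"
        unfolding Z_def g0_def by (rule Zspace_center_value[where lam=lam, OF irr _ AB[OF inverse_Suc_in_Xset] z])
      ultimately show "dist (z powi (- B (1 / real (Suc n)))) 1 < \<epsilon>" by simp
    qed
  qed
  with not_lim show False by blast
qed

lemma infl_bichar_cocycle_not_cohomologous:
  fixes \<theta> :: real and lam :: "real \<Rightarrow> real" and A B :: "real \<Rightarrow> int"
  assumes irr: "\<theta> \<notin> \<rat>" and AB: "\<And>x. x \<in> Xset \<Longrightarrow> lam x = A x + \<theta> * B x" and B0: "B 0 = 0"
    and z: "cmod z = 1" and not_lim: "\<not> (\<lambda>n. z powi (- B (1 / real (Suc n)))) \<longlonglongrightarrow> 1"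
  shows "\<not> (\<exists>w \<in> Z2 borel (+) Xset. pointwise_trivial borel (+) Xset w
            \<and> cohomologous GM (Gmult \<theta>) Xset (infl (bichar_cocycle lam)) (infl w))"
proof
  assume "\<exists>w \<in> Z2 borel (+) Xset. pointwise_trivial borel (+) Xset w
            \<and> cohomologous GM (Gmult \<theta>) Xset (infl (bichar_cocycle lam)) (infl w)"
  then obtain w F where w: "w \<in> Z2 borel (+) Xset" "pointwise_trivial borel (+) Xset w"
    and F: "(\<lambda>s. restrict (F s) Xset) \<in> GM \<rightarrow>\<^sub>M CXT_M Xset"
    and coh: "\<forall>g\<in>Gcar. \<forall>h\<in>Gcar. \<forall>x\<in>Xset. infl (bichar_cocycle lam) g h x =
      infl w g h x * (F g x * F h x * inverse (F (Gmult \<theta> g h) x))"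
    unfolding cohomologous_def space_GM by blast
  define g0 where "g0 = (0::real, 0::real, 1::complex, z)"
  have center_value: "w 0 0 x * F g0 x = z powi (- B x)" if "x \<in> Xset" for x
    using cobdry_mod_symmetric.F_center_value[OF cobdry_mod_symmetric_if_cohomologous[OF w F coh that AB[OF that]] irr z]
    by (simp add: g0_def)
  have "(\<lambda>(s, t). restrict (w s t) Xset) \<in> borel \<Otimes>\<^sub>M borel \<rightarrow>\<^sub>M CXT_M Xset"
    using w(1) unfolding Z2_def by blast
  from measurable_space[OF this, of "(0, 0)"] have "continuous_on Xset (w 0 0)"
    by (intro CXT_continuous_on) (simp add: space_pair_measure)
  moreover have "continuous_on Xset (F g0)"
    using measurable_space[OF F, of g0] z by (intro CXT_continuous_on) (simp add: g0_def Gcar_def)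
  ultimately have "continuous_on Xset (\<lambda>x. w 0 0 x * F g0 x)"
    by (rule continuous_on_mult)
  then have "(\<lambda>n. w 0 0 (1 / real (Suc n)) * F g0 (1 / real (Suc n))) \<longlonglongrightarrow> w 0 0 0 * F g0 0"
    by (rule continuous_on_Xset_tendsto)
  then have "(\<lambda>n. z powi (- B (1 / real (Suc n)))) \<longlonglongrightarrow> z powi (- B 0)"
    unfolding center_value[OF zero_in_Xset] center_value[OF inverse_Suc_in_Xset] .
  then have "(\<lambda>n. z powi (- B (1 / real (Suc n)))) \<longlonglongrightarrow> 1"
    by (simp add: B0)
  with not_lim show False by blast
qed

theorem mainTheorem5:
  fixes \<theta> :: real and lam :: "real \<Rightarrow> real"
    and v :: "(real \<times> real) \<Rightarrow> (real \<times> real) \<Rightarrow> real \<Rightarrow> complex"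
  assumes irr: "\<theta> \<notin> \<rat>"
    and cont: "continuous_on Xset lam"
    and range: "\<forall>x\<in>Xset. \<exists>a b :: int. lam x = of_int a + \<theta> * of_int b"
    and zero: "lam 0 = 0"
    and nz: "\<forall>n::nat. n \<ge> 1 \<longrightarrow> lam (1 / real n) \<noteq> 0"
    and vdef: "v = (\<lambda>(s1,t1) (s2,t2) x. exp (\<i> * of_real (lam x * s1 * t2)))"
  shows "v \<in> Z2 borel (+) Xset
    \<and> \<not> pointwise_trivial borel (+) Xset v
    \<and> infl v \<in> Z2 GM (Gmult \<theta>) Xset
    \<and> pointwise_trivial GM (Gmult \<theta>) Xset (infl v)
    \<and> \<not> open_map (top_of_set (Zspace GM (Gmult \<theta>) Xset (infl v))) (top_of_set Xset) snd
    \<and> \<not> (\<exists>w \<in> Z2 borel (+) Xset. pointwise_trivial borel (+) Xset w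
            \<and> cohomologous GM (Gmult \<theta>) Xset (infl v) (infl w))"
proof -
  have v: "v = bichar_cocycle lam"
    unfolding vdef bichar_cocycle_def by (simp add: case_prod_unfold)
  obtain A B :: "real \<Rightarrow> int" where AB: "\<And>x. x \<in> Xset \<Longrightarrow> lam x = A x + \<theta> * B x"
    using range by metis
  have B0: "B 0 = 0"
    using irrational_coeffs_unique[OF irr, of "A 0" "B 0" 0 0] AB[OF zero_in_Xset] zero by simp
  have "(\<lambda>n. lam (1 / real (Suc n))) \<longlonglongrightarrow> 0"
    using continuous_on_Xset_tendsto[OF cont] by (simp only: zero)
  moreover have "lam (1 / real (Suc n)) \<noteq> 0" for n
    using nz[rule_format, of "Suc n"] by simp
  ultimately have "eventually (\<lambda>n. B (1 / real (Suc n)) \<noteq> 0) sequentially"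
    using AB[OF inverse_Suc_in_Xset] by (intro eventually_irrational_coeff_nonzero) auto
  then have "eventually (\<lambda>n. - B (1 / real (Suc n)) \<noteq> 0) sequentially"
    by simp
  then obtain z where z: "cmod z = 1" "\<not> (\<lambda>n. z powi (- B (1 / real (Suc n)))) \<longlonglongrightarrow> 1"
    using ex_unimodular_powi_not_tendsto_1 by metis
  have "1 \<in> Xset" "lam 1 \<noteq> 0"
    using inverse_Suc_in_Xset[of 0] nz by auto
  then show ?thesis
    unfolding v
    using bichar_cocycle_Z2[OF compact_Xset cont] bichar_cocycle_not_pointwise_trivial
      infl_bichar_cocycle_Z2[OF compact_Xset cont] infl_bichar_cocycle_pointwise_trivial[OF range]
      Zspace_snd_not_open_map[OF irr zero AB z] infl_bichar_cocycle_not_cohomologous[OF irr AB B0 z]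
    by blast
qed

end
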